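(* Let $H=(V,E)$ be an uncapacitated hypergraph, let $v_1,\ldots,v_n$ be an MA-ordering of $H$, fix a head ordering of the edges, let $k\ge0$ be an integer, and let $H_k$ be the hypergraph obtained from $H$ via this ordering as described in the context. Then $v_1,\ldots,v_n$ is an MA-ordering of $H_k$.
   Context: A hypergraph $H=(V,E)$ has finite vertex set $V$ and a finite multiset $E$ of edges (subsets of $V$), each with capacity $1$. For subsets $A_1,\ldots,A_k$, $d(A_1,\ldots,A_k)$ is the number of edges meeting every $A_i$ (a vertex $v$ stands for $\{v\}$). For an ordering $v_1,\ldots,v_n$, $V_i=\{v_1,\ldots,v_i\}$ ($V_0=\emptyset$); it is an MA-ordering if $d(V_{i-1},v_i)\ge d(V_{i-1},v_j)$ for all $1\le i<j\le n$. The head $h(e)$ of an edge is its vertex of smallest index; a head ordering of the edges is one in which the index of the head is non-decreasing; $e$ is a backward edge of $v$ if $v\in e$ and $h(e)\ne v$; $D_k(v)$ is the set of the first $k$ backward edges of $v$ in the head ordering (all of them if fewer than $k$). For $e\in E$ let $e'=\{v\in e: e\in D_k(v)\}\cup\{h(e)\}$, and $H_k=(V,E_k)$ where $E_k$ is the multiset $\{e' : e\in E, |e'|\ge2\}$. *)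

theory Defs
  imports Main
begin

text \<open>A hypergraph with vertex ordering vs (a distinct list enumerating V, vs ! 0 = v_1, ...)
and edges given as a list es of sets. The list es represents the multiset E of edges
(duplicates allowed, each entry one edge of capacity 1); its order is the edge ordering.\<close>

definition dd :: "'a set list \<Rightarrow> 'a set \<Rightarrow> 'a set \<Rightarrow> nat" where
  "dd es A B = length (filter (\<lambda>e. e \<inter> A \<noteq> {} \<and> e \<inter> B \<noteq> {}) es)"

text \<open>MA-ordering (0-based): V_{i-1} = set (take i vs), v_i = vs ! i.\<close>
definition is_MA_ordering :: "'a list \<Rightarrow> 'a set list \<Rightarrow> bool" where
  "is_MA_ordering vs es \<longleftrightarrow>
     (\<forall>i j. i < j \<and> j < length vs \<longrightarrow>
        dd es (set (take i vs)) {vs ! i} \<ge> dd es (set (take i vs)) {vs ! j})"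

definition head_idx :: "'a list \<Rightarrow> 'a set \<Rightarrow> nat" where
  "head_idx vs e = (LEAST i. i < length vs \<and> vs ! i \<in> e)"

definition head :: "'a list \<Rightarrow> 'a set \<Rightarrow> 'a" where
  "head vs e = vs ! head_idx vs e"

definition is_head_ordering :: "'a list \<Rightarrow> 'a set list \<Rightarrow> bool" where
  "is_head_ordering vs es \<longleftrightarrow> sorted (map (head_idx vs) es)"

definition backward :: "'a list \<Rightarrow> 'a set list \<Rightarrow> 'a \<Rightarrow> nat \<Rightarrow> bool" where
  "backward vs es v j \<longleftrightarrow> j < length es \<and> v \<in> es ! j \<and> head vs (es ! j) \<noteq> v"

definition Dk :: "nat \<Rightarrow> 'a list \<Rightarrow> 'a set list \<Rightarrow> 'a \<Rightarrow> nat set" where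
  "Dk k vs es v = {j. backward vs es v j \<and> card {j'. j' < j \<and> backward vs es v j'} < k}"

definition edge_k :: "nat \<Rightarrow> 'a list \<Rightarrow> 'a set list \<Rightarrow> nat \<Rightarrow> 'a set" where
  "edge_k k vs es j = {v \<in> es ! j. j \<in> Dk k vs es v} \<union> {head vs (es ! j)}"

definition Hk_edges :: "nat \<Rightarrow> 'a list \<Rightarrow> 'a set list \<Rightarrow> 'a set list" where
  "Hk_edges k vs es = filter (\<lambda>e. card e \<ge> 2) (map (edge_k k vs es) [0..<length es])"

end

theory Submission
  imports Defs
begin

text \<open>Let \<open>P\<close> be a prefix of the ordering and \<open>v\<close> a vertex after it. An edge meets both \<open>P\<close>
  and \<open>v\<close> exactly when it is a backward edge of \<open>v\<close> with head in \<open>P\<close>, and in a head ordering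
  these come before all other backward edges of \<open>v\<close>. Hence \<open>D\<^sub>k(v)\<close> contains \<open>min k d(P, v)\<close>
  of them; each is cut down to an edge of \<open>H\<^sub>k\<close> that still contains \<open>v\<close> and its head, while
  every other edge of \<open>H\<^sub>k\<close> containing \<open>v\<close> misses \<open>P\<close>. So the degrees into \<open>P\<close> in \<open>H\<^sub>k\<close> are
  those in \<open>H\<close> capped at \<open>k\<close>, and capping is monotone.\<close>

lemma Collect_insert_if:
  "{x \<in> insert a A. P x} = (if P a then insert a {x \<in> A. P x} else {x \<in> A. P x})"
  by auto

lemma card_rank_less_eq_min:
  fixes B :: "nat set"
  assumes "finite B"
  shows "card {j\<in>B. card {j'\<in>B. j' < j} < k} = min k (card B)"
  using assms
proof (induction B rule: finite_linorder_max_induct)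
  case empty
  then show ?case by simp
next
  case (insert b A)
  define rank :: "nat set \<Rightarrow> nat \<Rightarrow> nat" where "rank C j = card {j'\<in>C. j' < j}" for C j
  have "b \<notin> A" using insert.hyps by auto
  have "rank (insert b A) j = rank A j" if "j \<in> A" for j
    unfolding rank_def using insert.hyps that by (metis insert_iff less_irrefl order.strict_trans)
  then have same: "{j\<in>A. rank (insert b A) j < k} = {j\<in>A. rank A j < k}"
    by auto
  have "rank (insert b A) b = card A"
    unfolding rank_def using insert.hyps by (auto intro: arg_cong[where f = card])
  then have "{j\<in>insert b A. rank (insert b A) j < k}
               = (if card A < k then insert b {j\<in>A. rank A j < k} else {j\<in>A. rank A j < k})"
    unfolding same[symmetric] by (simp only: Collect_insert_if)
  moreover have "card (insert b {j\<in>A. rank A j < k}) = Suc (card {j\<in>A. rank A j < k})"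
    using \<open>b \<notin> A\<close> insert.hyps by simp
  moreover have "card {j\<in>A. rank A j < k} = min k (card A)"
    using insert.IH unfolding rank_def .
  moreover have "card (insert b A) = Suc (card A)"
    using \<open>b \<notin> A\<close> insert.hyps by simp
  ultimately have "card {j\<in>insert b A. rank (insert b A) j < k} = min k (card (insert b A))"
    by simp
  then show ?case unfolding rank_def .
qed

lemma dd_conv_card:
  "dd es A B = card {j. j < length es \<and> es ! j \<inter> A \<noteq> {} \<and> es ! j \<inter> B \<noteq> {}}"
  unfolding dd_def by (simp add: length_filter_conv_card)

lemma head_idx_le: "i < length vs \<Longrightarrow> vs ! i \<in> e \<Longrightarrow> head_idx vs e \<le> i"
  unfolding head_idx_def by (rule Least_le) simp

lemma head_idx_less_length_and_mem:
  assumes "e \<subseteq> set vs" "e \<noteq> {}"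
  shows "head_idx vs e < length vs \<and> vs ! head_idx vs e \<in> e"
proof -
  obtain x where "x \<in> e" using assms(2) by blast
  then obtain i where i: "i < length vs \<and> vs ! i \<in> e"
    using assms(1) by (metis in_set_conv_nth subsetD)
  show ?thesis
    unfolding head_idx_def by (rule LeastI[where P = "\<lambda>i. i < length vs \<and> vs ! i \<in> e", OF i])
qed

lemma head_mem:
  assumes "e \<subseteq> set vs" "e \<noteq> {}"
  shows "head vs e \<in> e"
  using head_idx_less_length_and_mem[OF assms] unfolding head_def by simp

lemma meets_prefix_iff_head_idx_less:
  assumes "e \<subseteq> set vs" "e \<noteq> {}"
  shows "e \<inter> set (take i vs) \<noteq> {} \<longleftrightarrow> head_idx vs e < i"
proof
  assume "e \<inter> set (take i vs) \<noteq> {}"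
  then obtain i' where "i' < i" "i' < length vs" "vs ! i' \<in> e"
    by (auto simp: in_set_conv_nth)
  with head_idx_le show "head_idx vs e < i" by (meson le_less_trans)
next
  assume "head_idx vs e < i"
  with head_idx_less_length_and_mem[OF assms]
  have "vs ! head_idx vs e \<in> e \<inter> set (take i vs)"
    by (auto simp: in_set_conv_nth intro!: exI[where x = "head_idx vs e"])
  then show "e \<inter> set (take i vs) \<noteq> {}" by blast
qed

locale head_ordered_hypergraph =
  fixes vs :: "'a list" and es :: "'a set list"
  assumes distinct_vs: "distinct vs"
    and edges_wf: "\<forall>e\<in>set es. e \<subseteq> set vs \<and> e \<noteq> {}"
    and head_ordered: "is_head_ordering vs es"
begin

lemma edge_wf: "j < length es \<Longrightarrow> es ! j \<subseteq> set vs \<and> es ! j \<noteq> {}"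
  using edges_wf nth_mem by blast

lemma head_idx_mono:
  "j' \<le> j \<Longrightarrow> j < length es \<Longrightarrow> head_idx vs (es ! j') \<le> head_idx vs (es ! j)"
  using head_ordered unfolding is_head_ordering_def by (simp add: sorted_iff_nth_mono)

lemma head_neq_nth_if_head_idx_less:
  assumes "j < length es" "head_idx vs (es ! j) < jj" "jj < length vs"
  shows "head vs (es ! j) \<noteq> vs ! jj"
  using assms head_idx_less_length_and_mem[of "es ! j" vs] edge_wf[OF assms(1)] distinct_vs
  unfolding head_def by (simp add: nth_eq_iff_index_eq)

definition backward_from_prefix :: "nat \<Rightarrow> 'a \<Rightarrow> nat set" where
  "backward_from_prefix i v = {j. backward vs es v j \<and> head_idx vs (es ! j) < i}"

lemma finite_backward_from_prefix: "finite (backward_from_prefix i v)"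
  unfolding backward_from_prefix_def backward_def by simp

lemma dd_prefix_eq_card_backward_from_prefix:
  assumes "i \<le> jj" "jj < length vs"
  shows "dd es (set (take i vs)) {vs ! jj} = card (backward_from_prefix i (vs ! jj))"
proof -
  have "es ! j \<inter> set (take i vs) \<noteq> {} \<and> es ! j \<inter> {vs ! jj} \<noteq> {}
          \<longleftrightarrow> backward vs es (vs ! jj) j \<and> head_idx vs (es ! j) < i"
    if "j < length es" for j
    using meets_prefix_iff_head_idx_less[of "es ! j" vs i] edge_wf[OF that]
      head_neq_nth_if_head_idx_less[OF that _ assms(2)] assms(1) that
    unfolding backward_def by auto
  then show ?thesis
    unfolding dd_conv_card backward_from_prefix_def
    by (intro arg_cong[where f = card] Collect_cong) (auto simp: backward_def)
qed

lemma Dk_inter_backward_from_prefix: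
  "Dk k vs es v \<inter> backward_from_prefix i v
     = {j \<in> backward_from_prefix i v. card {j' \<in> backward_from_prefix i v. j' < j} < k}"
proof -
  have "{j'. j' < j \<and> backward vs es v j'} = {j' \<in> backward_from_prefix i v. j' < j}"
    if "j \<in> backward_from_prefix i v" for j
  proof -
    have "head_idx vs (es ! j') < i" if "j' < j" for j'
      using head_idx_mono[of j' j] \<open>j' < j\<close> \<open>j \<in> backward_from_prefix i v\<close>
      unfolding backward_from_prefix_def backward_def by simp
    then show ?thesis unfolding backward_from_prefix_def by auto
  qed
  moreover have "backward vs es v j" if "j \<in> backward_from_prefix i v" for j
    using that unfolding backward_from_prefix_def by simp
  ultimately show ?thesis unfolding Dk_def by auto
qed

lemma edge_k_subset: "j < length es \<Longrightarrow> edge_k k vs es j \<subseteq> es ! j"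
  using head_mem[of "es ! j" vs] edge_wf[of j] unfolding edge_k_def by auto

lemma finite_edge_k: "j < length es \<Longrightarrow> finite (edge_k k vs es j)"
  using edge_k_subset edge_wf by (meson finite_set finite_subset)

lemma edge_k_mem_head: "head vs (es ! j) \<in> edge_k k vs es j"
  unfolding edge_k_def by simp

lemma edge_k_meets_prefix_iff:
  assumes "j < length es" "i \<le> jj" "jj < length vs"
  shows "2 \<le> card (edge_k k vs es j) \<and> edge_k k vs es j \<inter> set (take i vs) \<noteq> {}
           \<and> vs ! jj \<in> edge_k k vs es j
         \<longleftrightarrow> j \<in> Dk k vs es (vs ! jj) \<inter> backward_from_prefix i (vs ! jj)"
    (is "?lhs \<longleftrightarrow> ?rhs")
proof
  assume ?lhs
  then have "head_idx vs (es ! j) < i"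
    using edge_k_subset[OF assms(1)] meets_prefix_iff_head_idx_less[of "es ! j" vs i]
      edge_wf[OF assms(1)] by blast
  with \<open>?lhs\<close> show ?rhs
    using head_neq_nth_if_head_idx_less[OF assms(1) _ assms(3)] assms(2)
    unfolding edge_k_def backward_from_prefix_def Dk_def by auto
next
  assume ?rhs
  then have j: "head_idx vs (es ! j) < i" "vs ! jj \<in> edge_k k vs es j"
    unfolding backward_from_prefix_def backward_def edge_k_def Dk_def by auto
  have head_neq: "head vs (es ! j) \<noteq> vs ! jj"
    using head_neq_nth_if_head_idx_less[OF assms(1) _ assms(3)] j(1) assms(2) by simp
  have "head vs (es ! j) \<in> set (take i vs)"
    using j(1) head_idx_less_length_and_mem[of "es ! j" vs] edge_wf[OF assms(1)]
    unfolding head_def by (auto simp: in_set_conv_nth)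
  moreover have "card {vs ! jj, head vs (es ! j)} \<le> card (edge_k k vs es j)"
    using j(2) edge_k_mem_head finite_edge_k[OF assms(1)] by (intro card_mono) auto
  ultimately show ?lhs
    using j(2) head_neq edge_k_mem_head by auto
qed

lemma dd_Hk_prefix_eq_card:
  assumes "i \<le> jj" "jj < length vs"
  shows "dd (Hk_edges k vs es) (set (take i vs)) {vs ! jj}
           = card (Dk k vs es (vs ! jj) \<inter> backward_from_prefix i (vs ! jj))"
proof -
  let ?f = "edge_k k vs es"
  have "dd (Hk_edges k vs es) (set (take i vs)) {vs ! jj}
          = card {j. j < length es \<and> 2 \<le> card (?f j) \<and> ?f j \<inter> set (take i vs) \<noteq> {}
                     \<and> vs ! jj \<in> ?f j}"
    unfolding dd_def Hk_edges_def
    by (simp add: length_filter_conv_card) (intro arg_cong[where f = card] Collect_cong, auto)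
  also have "{j. j < length es \<and> 2 \<le> card (?f j) \<and> ?f j \<inter> set (take i vs) \<noteq> {}
                 \<and> vs ! jj \<in> ?f j}
               = Dk k vs es (vs ! jj) \<inter> backward_from_prefix i (vs ! jj)"
    using edge_k_meets_prefix_iff[OF _ assms]
    unfolding backward_from_prefix_def backward_def by blast
  finally show ?thesis .
qed

lemma dd_Hk_prefix_eq_min:
  assumes "i \<le> jj" "jj < length vs"
  shows "dd (Hk_edges k vs es) (set (take i vs)) {vs ! jj} = min k (dd es (set (take i vs)) {vs ! jj})"
  using dd_Hk_prefix_eq_card[OF assms] dd_prefix_eq_card_backward_from_prefix[OF assms]
  by (simp add: Dk_inter_backward_from_prefix card_rank_less_eq_min finite_backward_from_prefix)
end

theorem mainTheorem13:
  fixes vs :: "'a list" and es :: "'a set list" and k :: nat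
  assumes "distinct vs"
    and "\<forall>e\<in>set es. e \<subseteq> set vs \<and> e \<noteq> {}"
    and "is_MA_ordering vs es"
    and "is_head_ordering vs es"
  shows "is_MA_ordering vs (Hk_edges k vs es)"
proof -
  interpret head_ordered_hypergraph vs es
    using assms(1,2,4) by unfold_locales
  show ?thesis
    unfolding is_MA_ordering_def
  proof (intro allI impI)
    fix i j
    assume ij: "i < j \<and> j < length vs"
    then have "dd es (set (take i vs)) {vs ! j} \<le> dd es (set (take i vs)) {vs ! i}"
      using assms(3) unfolding is_MA_ordering_def by blast
    with ij show "dd (Hk_edges k vs es) (set (take i vs)) {vs ! j}
                    \<le> dd (Hk_edges k vs es) (set (take i vs)) {vs ! i}"
      by (simp add: dd_Hk_prefix_eq_min)
  qed
qed
end
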